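(* Let $F=\{f_i\}_{i=1}^N$ be a uniform tight frame for an $n$-dimensional Hilbert space $\mathcal{H}_n$ and let $p>1$. Then the canonical dual $S_F^{-1}F=\{S_F^{-1}f_i\}_{i=1}^N$ is a $1$-erasure spectrally optimal dual of $F$, i.e. $S_F^{-1}F\in\zeta_{\mathfrak{R}}^{(1),p}(F)$.
   Context: A uniform tight frame is a frame with $\sum_i|\langle f,f_i\rangle|^2=A\|f\|^2$ for all $f$ (some $A>0$) and all $\|f_i\|$ equal; $S_F$ is the frame operator $S_Ff=\sum_i\langle f,f_i\rangle f_i$. $G=\{g_i\}$ is a dual of $F$ if $f=\sum_i\langle f,f_i\rangle g_i$ for all $f$. For a dual $G$, $\mathrm{AE}_{\mathfrak{R}}^{(1),p}(F,G)=\{\frac1N\sum_{i=1}^N|\langle f_i,g_i\rangle|^p\}^{1/p}$ (the $\ell^p$-average of the spectral radii of the one-erasure error operators $f\mapsto\langle f,f_i\rangle g_i$), and $\zeta_{\mathfrak{R}}^{(1),p}(F)$ is the set of duals minimizing it over all duals of $F$. *)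

theory Defs
  imports "HOL-Analysis.Analysis"
begin

text \<open>The n-dimensional complex Hilbert space H_n is modelled as complex^'n
  (index type 'n finite, n = CARD('n)) with its standard inner product,
  linear in the first argument.\<close>

definition cinner :: "complex ^ 'n \<Rightarrow> complex ^ 'n \<Rightarrow> complex" where
  "cinner x y = (\<Sum>k\<in>UNIV. x $ k * cnj (y $ k))"

definition hnorm :: "complex ^ 'n \<Rightarrow> real" where
  "hnorm x = sqrt (Re (cinner x x))"

text \<open>A finite sequence F = {f_i}, i < N (0-based indexing).\<close>

definition frame_op :: "nat \<Rightarrow> (nat \<Rightarrow> complex ^ 'n) \<Rightarrow> complex ^ 'n \<Rightarrow> complex ^ 'n" where
  "frame_op N F f = (\<Sum>i<N. cinner f (F i) *s F i)"

definition tight_frame :: "nat \<Rightarrow> (nat \<Rightarrow> complex ^ 'n) \<Rightarrow> bool" where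
  "tight_frame N F \<longleftrightarrow> (\<exists>A>0. \<forall>f. (\<Sum>i<N. (cmod (cinner f (F i)))\<^sup>2) = A * (hnorm f)\<^sup>2)"

definition uniform_tight_frame :: "nat \<Rightarrow> (nat \<Rightarrow> complex ^ 'n) \<Rightarrow> bool" where
  "uniform_tight_frame N F \<longleftrightarrow> tight_frame N F \<and> (\<forall>i<N. \<forall>j<N. hnorm (F i) = hnorm (F j))"

definition is_dual :: "nat \<Rightarrow> (nat \<Rightarrow> complex ^ 'n) \<Rightarrow> (nat \<Rightarrow> complex ^ 'n) \<Rightarrow> bool" where
  "is_dual N F G \<longleftrightarrow> (\<forall>f. f = (\<Sum>i<N. cinner f (F i) *s G i))"

text \<open>l^p-average of the spectral radii |<f_i,g_i>| of the one-erasure error operators.\<close>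

definition AE_R1 :: "real \<Rightarrow> nat \<Rightarrow> (nat \<Rightarrow> complex ^ 'n) \<Rightarrow> (nat \<Rightarrow> complex ^ 'n) \<Rightarrow> real" where
  "AE_R1 p N F G = ((1 / real N) * (\<Sum>i<N. cmod (cinner (F i) (G i)) powr p)) powr (1 / p)"

definition zeta_R1 :: "real \<Rightarrow> nat \<Rightarrow> (nat \<Rightarrow> complex ^ 'n) \<Rightarrow> (nat \<Rightarrow> complex ^ 'n) set" where
  "zeta_R1 p N F = {G. is_dual N F G \<and> (\<forall>G'. is_dual N F G' \<longrightarrow> AE_R1 p N F G \<le> AE_R1 p N F G')}"

definition canonical_dual :: "nat \<Rightarrow> (nat \<Rightarrow> complex ^ 'n) \<Rightarrow> nat \<Rightarrow> complex ^ 'n" where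
  "canonical_dual N F i = inv (frame_op N F) (F i)"

end

theory Submission
  imports Defs
begin

text \<open>A tight frame has frame operator \<open>S\<^sub>F = A \<cdot> I\<close> (by polarization, since
  \<open>\<langle>S\<^sub>F f, f\<rangle> = A \<parallel>f\<parallel>\<^sup>2\<close>), so its canonical dual is \<open>g\<^sub>i = f\<^sub>i / A\<close>. For every dual \<open>G\<close>
  the sum \<open>\<Sum>\<^sub>i \<langle>f\<^sub>i, g\<^sub>i\<rangle>\<close> is the trace of the identity, i.e. \<open>n\<close>. Hence the
  \<open>\<ell>\<^sup>p\<close>-mean of the \<open>|\<langle>f\<^sub>i, g\<^sub>i\<rangle>|\<close> is at least their arithmetic mean, which is at
  least \<open>n / N\<close>; for a uniform frame the canonical dual has \<open>\<langle>f\<^sub>i, g\<^sub>i\<rangle> = \<parallel>f\<^sub>i\<parallel>\<^sup>2 / A\<close>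
  independent of \<open>i\<close>, hence equal to \<open>n / N\<close>, and attains this bound.\<close>

lemma powr_ge_tangent:
  fixes x c p :: real
  assumes "x \<ge> 0" "c > 0" "p \<ge> 1"
  shows "c powr p + p * c powr (p - 1) * (x - c) \<le> x powr p"
proof (cases "x = 0")
  case True
  \<comment> \<open>\<open>powr_convex\<close> only covers the open half-line\<close>
  have "c powr (p - 1) * c = c powr p"
    using assms(2) by (simp add: powr_diff)
  then show ?thesis
    using True assms by (simp add: algebra_simps)
next
  case False
  have deriv: "((\<lambda>x. x powr p) has_field_derivative p * c powr (p - 1)) (at c within {0<..})"
    using assms by (auto intro!: derivative_eq_intros)
  have "p * c powr (p - 1) * (x - c) \<le> x powr p - c powr p"
    by (rule convex_on_imp_above_tangent[OF powr_convex _ _ _ deriv])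
      (use assms False in \<open>auto simp: interior_open\<close>)
  then show ?thesis by simp
qed

lemma mean_le_power_mean:
  fixes a :: "'a \<Rightarrow> real" and p :: real
  assumes "finite S" "S \<noteq> {}" "p \<ge> 1" "\<And>i. i \<in> S \<Longrightarrow> a i \<ge> 0"
  shows "(\<Sum>i\<in>S. a i) / card S \<le> ((\<Sum>i\<in>S. a i powr p) / card S) powr (1 / p)"
proof -
  define c where "c = (\<Sum>i\<in>S. a i) / card S"
  have card: "real (card S) > 0"
    using assms(1,2) by (simp add: card_gt_0_iff)
  have "c \<ge> 0"
    unfolding c_def using assms(4) by (simp add: sum_nonneg)
  moreover have "c powr p \<le> (\<Sum>i\<in>S. a i powr p) / card S" if "c > 0"
  proof -
    have "(\<Sum>i\<in>S. c powr p + p * c powr (p - 1) * (a i - c)) \<le> (\<Sum>i\<in>S. a i powr p)"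
      by (intro sum_mono powr_ge_tangent) (use assms that in auto)
    moreover have "(\<Sum>i\<in>S. c powr p + p * c powr (p - 1) * (a i - c)) = card S * c powr p"
      using card by (simp add: sum.distrib sum_subtractf flip: sum_distrib_left) (simp add: c_def)
    ultimately show ?thesis
      using card by (simp add: field_simps)
  qed
  moreover have "0 \<le> (\<Sum>i\<in>S. a i powr p) / card S"
    by (simp add: sum_nonneg)
  ultimately show ?thesis
    using assms(3) powr_mono2[of "1 / p" "c powr p"]
    by (cases "c = 0") (auto simp: powr_powr simp flip: c_def)
qed

lemma cinner_add_left: "cinner (x + y) z = cinner x z + cinner y z"
  by (simp add: cinner_def algebra_simps sum.distrib)

lemma cinner_add_right: "cinner z (x + y) = cinner z x + cinner z y"
  by (simp add: cinner_def algebra_simps sum.distrib)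

lemma cinner_diff_left: "cinner (x - y) z = cinner x z - cinner y z"
  by (simp add: cinner_def algebra_simps sum_subtractf)

lemma cinner_scale_left: "cinner (c *s x) y = c * cinner x y"
  by (simp add: cinner_def sum_distrib_left algebra_simps)

lemma cinner_scale_right: "cinner x (c *s y) = cnj c * cinner x y"
  by (simp add: cinner_def sum_distrib_left algebra_simps)

lemma cinner_commute: "cinner y x = cnj (cinner x y)"
  by (simp add: cinner_def mult.commute)

lemma cinner_sum_left: "cinner (\<Sum>i\<in>I. x i) y = (\<Sum>i\<in>I. cinner (x i) y)"
  unfolding cinner_def by (simp add: sum_distrib_right) (rule sum.swap)

lemma cinner_self: "cinner x x = of_real (\<Sum>k\<in>UNIV. (cmod (x $ k))\<^sup>2)"
  unfolding cinner_def of_real_sum complex_norm_square ..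

lemma cinner_self_eq_0: "cinner x x = 0 \<longleftrightarrow> x = 0"
proof
  assume "cinner x x = 0"
  then have "(\<Sum>k\<in>UNIV. (cmod (x $ k))\<^sup>2) = 0"
    by (simp only: cinner_self of_real_eq_0_iff)
  then show "x = 0"
    by (simp add: sum_nonneg_eq_0_iff vec_eq_iff)
qed (simp add: cinner_def)

lemma hnorm_power2: "(hnorm x)\<^sup>2 = Re (cinner x x)"
  unfolding hnorm_def by (simp add: cinner_self sum_nonneg)

lemma cinner_self_hnorm: "cinner x x = of_real ((hnorm x)\<^sup>2)"
  by (simp add: hnorm_power2 cinner_self)

text \<open>Over \<open>\<complex>\<close> (unlike over \<open>\<real>\<close>) an operator is determined by its quadratic form:
  testing with \<open>x + y\<close> and \<open>x + \<i> y\<close> isolates \<open>\<langle>T x, y\<rangle>\<close>.\<close>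

lemma operator_eq_0_if_quadratic_form_eq_0:
  fixes T :: "complex ^ 'n \<Rightarrow> complex ^ 'n"
  assumes add: "\<And>x y. T (x + y) = T x + T y"
    and scale: "\<And>c x. T (c *s x) = c *s T x"
    and form: "\<And>f. cinner (T f) f = 0"
  shows "T x = 0"
proof -
  have "cinner (T x) y = 0" for y
  proof -
    have sym: "cinner (T x) y + cinner (T y) x = 0"
      using form[of "x + y"] form[of x] form[of y]
      by (simp add: add cinner_add_left cinner_add_right add.commute)
    have "cinner (T (x + \<i> *s y)) (x + \<i> *s y) = \<i> * (cinner (T y) x - cinner (T x) y)"
      using form[of x] form[of y]
      by (simp add: add scale cinner_add_left cinner_add_right cinner_scale_left
          cinner_scale_right algebra_simps)
    then have "cinner (T x) y = cinner (T y) x"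
      using form[of "x + \<i> *s y"] by simp
    with sym show ?thesis by simp
  qed
  then show ?thesis
    using cinner_self_eq_0 by blast
qed

lemma frame_op_add: "frame_op N F (x + y) = frame_op N F x + frame_op N F y"
  by (simp add: frame_op_def cinner_add_left vector_sadd_rdistrib sum.distrib)

lemma frame_op_scale: "frame_op N F (c *s x) = c *s frame_op N F x"
  by (simp add: frame_op_def cinner_scale_left vec_eq_iff sum_distrib_left mult.assoc)

lemma cinner_frame_op_self:
  fixes F :: "nat \<Rightarrow> complex ^ 'n"
  shows "cinner (frame_op N F f) f = of_real (\<Sum>i<N. (cmod (cinner f (F i)))\<^sup>2)"
proof -
  have "cinner (frame_op N F f) f = (\<Sum>i<N. cinner f (F i) * cnj (cinner f (F i)))"
    unfolding frame_op_def by (simp add: cinner_sum_left cinner_scale_left flip: cinner_commute)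
  then show ?thesis
    by (simp only: of_real_sum complex_norm_square)
qed

lemma tight_frame_frame_op_eq_scalar:
  fixes F :: "nat \<Rightarrow> complex ^ 'n"
  assumes "tight_frame N F"
  obtains A :: real where "A > 0" "frame_op N F = (\<lambda>f. of_real A *s f)"
proof -
  obtain A where "A > 0" and A: "\<And>f. (\<Sum>i<N. (cmod (cinner f (F i)))\<^sup>2) = A * (hnorm f)\<^sup>2"
    using assms unfolding tight_frame_def by blast
  define T where "T f = frame_op N F f - of_real A *s f" for f
  have "T f = 0" for f
  proof (rule operator_eq_0_if_quadratic_form_eq_0[of T])
    show "T (x + y) = T x + T y" for x y
      by (simp add: T_def frame_op_add vector_add_ldistrib)
    show "T (c *s x) = c *s T x" for c x
      by (simp add: T_def frame_op_scale vector_smult_assoc vector_ssub_ldistrib mult.commute)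
    show "cinner (T f) f = 0" for f
      by (simp add: T_def cinner_diff_left cinner_scale_left cinner_frame_op_self A
          cinner_self_hnorm)
  qed
  then have "frame_op N F = (\<lambda>f. of_real A *s f)"
    by (auto simp: T_def fun_eq_iff)
  with \<open>A > 0\<close> show thesis by (rule that)
qed

lemma canonical_dual_scalar_frame_op:
  fixes F :: "nat \<Rightarrow> complex ^ 'n"
  assumes "frame_op N F = (\<lambda>f. c *s f)" "c \<noteq> 0"
  shows "canonical_dual N F i = inverse c *s F i"
proof -
  have "inj (frame_op N F)"
    by (rule inj_on_inverseI[of _ "\<lambda>y. inverse c *s y"]) (simp add: assms vector_smult_assoc)
  then show ?thesis
    unfolding canonical_dual_def by (rule inv_f_eq) (simp add: assms vector_smult_assoc)
qed

lemma is_dual_canonical_dual_scalar_frame_op: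
  fixes F :: "nat \<Rightarrow> complex ^ 'n"
  assumes "frame_op N F = (\<lambda>f. c *s f)" "c \<noteq> 0"
  shows "is_dual N F (canonical_dual N F)"
  unfolding is_dual_def
proof
  fix f :: "complex ^ 'n"
  have "(\<Sum>i<N. cinner f (F i) *s canonical_dual N F i) = inverse c *s frame_op N F f"
    by (simp add: canonical_dual_scalar_frame_op[OF assms] frame_op_def vec_eq_iff
        sum_distrib_left algebra_simps)
  also have "\<dots> = f"
    using assms by (simp add: vector_smult_assoc)
  finally show "f = (\<Sum>i<N. cinner f (F i) *s canonical_dual N F i)" by simp
qed

lemma tight_frame_is_dual_canonical_dual:
  fixes F :: "nat \<Rightarrow> complex ^ 'n"
  assumes "tight_frame N F"
  shows "is_dual N F (canonical_dual N F)"
proof -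
  obtain A where "A > 0" and S: "frame_op N F = (\<lambda>f. of_real A *s f)"
    using tight_frame_frame_op_eq_scalar[OF assms] by blast
  then show ?thesis
    by (intro is_dual_canonical_dual_scalar_frame_op[OF S]) simp
qed

text \<open>\<open>\<Sum>\<^sub>i \<langle>f\<^sub>i, g\<^sub>i\<rangle>\<close> is the trace of \<open>f \<mapsto> \<Sum>\<^sub>i \<langle>f, f\<^sub>i\<rangle> g\<^sub>i = f\<close>; its diagonal entries are
  read off by reconstructing the standard basis vectors.\<close>

lemma is_dual_sum_cinner:
  fixes F G :: "nat \<Rightarrow> complex ^ 'n"
  assumes "is_dual N F G"
  shows "(\<Sum>i<N. cinner (F i) (G i)) = of_nat CARD('n)"
proof -
  have diagonal: "(\<Sum>i<N. cnj (F i $ k) * G i $ k) = 1" for k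
  proof -
    have "cinner (axis k 1) (F i) = cnj (F i $ k)" for i
      unfolding cinner_def axis_def
      by (subst sum.cong[OF refl, of _ _ "\<lambda>j. if j = k then cnj (F i $ j) else 0"]) auto
    moreover have "axis k 1 = (\<Sum>i<N. cinner (axis k 1) (F i) *s G i)"
      using assms unfolding is_dual_def by blast
    then have "axis k (1::complex) $ k = (\<Sum>i<N. cinner (axis k 1) (F i) *s G i) $ k"
      by simp
    ultimately show ?thesis by simp
  qed
  have "cnj (\<Sum>i<N. cinner (F i) (G i)) = (\<Sum>k\<in>UNIV. \<Sum>i<N. cnj (F i $ k) * G i $ k)"
    unfolding cinner_def by (subst sum.swap) (simp add: mult.commute)
  also have "\<dots> = of_nat CARD('n)"
    by (simp add: diagonal)
  finally show ?thesis
    by (metis complex_cnj_cnj complex_cnj_of_nat)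
qed

lemma is_dual_length_pos:
  fixes F G :: "nat \<Rightarrow> complex ^ 'n"
  shows "is_dual N F G \<Longrightarrow> N > 0"
  using is_dual_sum_cinner[of N F G] by (cases N) auto

lemma dim_div_length_le_AE_R1:
  fixes F G :: "nat \<Rightarrow> complex ^ 'n"
  assumes "is_dual N F G" "p \<ge> 1"
  shows "real CARD('n) / N \<le> AE_R1 p N F G"
proof -
  have "real CARD('n) = cmod (\<Sum>i<N. cinner (F i) (G i))"
    using is_dual_sum_cinner[OF assms(1)] by simp
  also have "\<dots> \<le> (\<Sum>i<N. cmod (cinner (F i) (G i)))"
    by (rule norm_sum)
  finally have "real CARD('n) / N \<le> (\<Sum>i<N. cmod (cinner (F i) (G i))) / N"
    by (simp add: divide_right_mono)
  also have "\<dots> \<le> AE_R1 p N F G"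
    using mean_le_power_mean[of "{..<N}" p "\<lambda>i. cmod (cinner (F i) (G i))"]
      is_dual_length_pos[OF assms(1)] assms(2)
    by (simp add: AE_R1_def lessThan_empty_iff)
  finally show ?thesis .
qed

lemma AE_R1_const:
  assumes "N > 0" "p \<noteq> 0" "h \<ge> 0" "\<And>i. i < N \<Longrightarrow> cmod (cinner (F i) (G i)) = h"
  shows "AE_R1 p N F G = h"
proof -
  have "(\<Sum>i<N. cmod (cinner (F i) (G i)) powr p) = N * h powr p"
    using assms(4) by simp
  then show ?thesis
    using assms(1-3) by (simp add: AE_R1_def powr_powr)
qed

lemma uniform_tight_frame_cinner_canonical_dual:
  fixes F :: "nat \<Rightarrow> complex ^ 'n"
  assumes "uniform_tight_frame N F" "i < N"
  shows "cinner (F i) (canonical_dual N F i) = of_real (CARD('n) / N)"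
proof -
  obtain A where "A > 0" and S: "frame_op N F = (\<lambda>f. of_real A *s f)"
    using assms(1) tight_frame_frame_op_eq_scalar unfolding uniform_tight_frame_def by blast
  define h where "h = (hnorm (F 0))\<^sup>2 / A"
  have const: "cinner (F j) (canonical_dual N F j) = of_real h" if "j < N" for j
  proof -
    have "hnorm (F j) = hnorm (F 0)"
      using assms(1) that gr_zeroI[of N] unfolding uniform_tight_frame_def by blast
    moreover have "canonical_dual N F j = of_real (inverse A) *s F j"
      using \<open>A > 0\<close> by (simp add: canonical_dual_scalar_frame_op[OF S])
    ultimately show ?thesis
      by (simp add: cinner_scale_right cinner_self_hnorm h_def divide_inverse mult.commute
          del: of_real_inverse)
  qed
  have "of_real (N * h) = (\<Sum>j<N. cinner (F j) (canonical_dual N F j))"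
    by (simp add: const)
  also have "\<dots> = of_nat CARD('n)"
    using assms(1) unfolding uniform_tight_frame_def
    by (intro is_dual_sum_cinner tight_frame_is_dual_canonical_dual) simp
  finally have "real N * h = CARD('n)"
    by (metis of_real_eq_iff of_real_of_nat_eq)
  then have "h = CARD('n) / N"
    using assms(2) by (simp add: field_simps)
  with const assms(2) show ?thesis by simp
qed

theorem corollary5p2:
  fixes N :: nat and F :: "nat \<Rightarrow> complex ^ 'n" and p :: real
  assumes "uniform_tight_frame N F"
    and "p > 1"
  shows "canonical_dual N F \<in> zeta_R1 p N F"
proof -
  have dual: "is_dual N F (canonical_dual N F)"
    using assms(1) tight_frame_is_dual_canonical_dual unfolding uniform_tight_frame_def by blast
  have "AE_R1 p N F (canonical_dual N F) = real CARD('n) / N"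
    using is_dual_length_pos[OF dual] assms
    by (intro AE_R1_const) (simp_all add: uniform_tight_frame_cinner_canonical_dual norm_divide)
  then have "AE_R1 p N F (canonical_dual N F) \<le> AE_R1 p N F G" if "is_dual N F G" for G
    using dim_div_length_le_AE_R1[OF that] assms(2) by simp
  with dual show ?thesis
    unfolding zeta_R1_def by blast
qed

end
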